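(* Let $\alpha,\beta$ be real constants with $2\alpha+\beta=1$ and $\alpha\le 2/3$, and let $A,B>0$. There exist constants $C_1>0$ and $c>0$ (depending only on $\alpha,\beta,A,B$) such that the following holds. Let $m,n$ be positive integers with $m\le n^2/C_1$ and $n\le m^2/C_1$, and let $P$ be a finite set of points and $L$ a finite set of lines in $\mathbb{R}^2$ with $|P|\le A\,m^{\alpha}n^{\beta}$ and $|I(P,L)|\ge B\,m^{\alpha+\frac23}n^{\beta-\frac13}$. Then $|L|\ge c\,m^{\frac12\alpha+1}n^{\frac12\beta-\frac12}$.
   Context: $I(P,L)$ denotes the set of incidences between $P$ and $L$, i.e. pairs $(p,\ell)\in P\times L$ with $p\in\ell$. *)

theory Defs
  imports Complex_Main
begin

definition is_line :: "(real \<times> real) set \<Rightarrow> bool" where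
  "is_line l \<longleftrightarrow> (\<exists>a b c. (a \<noteq> 0 \<or> b \<noteq> 0) \<and> l = {(x, y). a * x + b * y = c})"

definition incidences :: "(real \<times> real) set \<Rightarrow> (real \<times> real) set set \<Rightarrow> ((real \<times> real) \<times> (real \<times> real) set) set" where
  "incidences P L = {(p, l). p \<in> P \<and> l \<in> L \<and> p \<in> l}"

end

theory Submission
  imports Defs
begin

text \<open>
  Szemeredi-Trotter in the form: either I \<le> 4|P| + |L| or (I - |L|)^3 \<le> 64 |P|^2 |L|^2.
  After a shear all points have distinct abscissae; joining consecutive points of P on each line
  gives a straight-line graph with at least I - |L| edges, and it has at most |L|^2 crossings, since
  two crossing edges lie on distinct lines, which determine both edges. The crossing lemma
  |E|^3 \<le> 64 |V|^2 cr follows by random sampling from |E| \<le> 3|V| + cr, i.e. from |E| \<le> 3|V| for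
  plane straight-line graphs. For that bound, every edge except the steepest one at its left
  endpoint forms a wedge with the next steeper edge there, and every wedge is charged to the
  leftmost vertex inside it; planarity forces the wedges charged to one vertex to cut disjoint
  intervals out of the vertical line through it, all touching the vertex, so each vertex is
  charged at most twice.

  Under the hypotheses of the theorem the assumed lower bound for I is at least 8 times the
  assumed upper bound for |P| and at least B times the claimed bound for |L|; each alternative of
  Szemeredi-Trotter then yields the claimed bound.
\<close>

declare split_paired_All[simp del] split_paired_Ex[simp del]

type_synonym point = "real \<times> real"

section \<open>Segments and wedges\<close>

definition slope :: "point \<Rightarrow> point \<Rightarrow> real" where
  "slope a b = (snd b - snd a) / (fst b - fst a)"

definition line_at :: "point \<Rightarrow> real \<Rightarrow> real \<Rightarrow> real" where
  "line_at a s x = snd a + s * (x - fst a)"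

definition open_seg :: "point \<Rightarrow> point \<Rightarrow> point set" where
  "open_seg a b = {z. fst a < fst z \<and> fst z < fst b \<and> snd z = line_at a (slope a b) (fst z)}"

definition wedge :: "point \<Rightarrow> real \<Rightarrow> real \<Rightarrow> point set" where
  "wedge a s t = {z. fst a < fst z \<and> line_at a s (fst z) \<le> snd z \<and> snd z \<le> line_at a t (fst z)}"

definition open_wedge :: "point \<Rightarrow> real \<Rightarrow> real \<Rightarrow> point set" where
  "open_wedge a s t = {z. fst a < fst z \<and> line_at a s (fst z) < snd z \<and> snd z < line_at a t (fst z)}"

lemma line_at_slope: "fst a \<noteq> fst b \<Longrightarrow> line_at a (slope a b) (fst b) = snd b"
  unfolding line_at_def slope_def by simp

lemma open_wedge_iff_slope:
  "p \<in> open_wedge a s t \<longleftrightarrow> fst a < fst p \<and> s < slope a p \<and> slope a p < t"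
proof (cases "fst a < fst p")
  case True
  then show ?thesis unfolding open_wedge_def line_at_def slope_def by (auto simp: field_simps)
qed (simp add: open_wedge_def)

lemma affine_last_zero:
  fixes f g :: "real \<Rightarrow> real"
  assumes "v < u" and f: "\<And>x. f x = f u + m * (x - u)" and g: "\<And>x. g x = g u + k * (x - u)"
    and "f u > 0" "g u > 0" "f v \<le> 0 \<or> g v \<le> 0"
  shows "\<exists>x\<in>{v..<u}. f x \<ge> 0 \<and> g x \<ge> 0 \<and> (f x = 0 \<or> g x = 0)"
proof -
  have pos: "h x > 0" if h: "\<And>x. h x = h u + \<mu> * (x - u)" "h u > 0" "\<mu> \<le> 0" "x \<le> u"
    for h :: "real \<Rightarrow> real" and \<mu> x
  proof -
    have "\<mu> * (x - u) \<ge> 0" using that(3,4) by (simp add: mult_nonpos_nonpos)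
    then show ?thesis using h(1,2) by (metis add_pos_nonneg)
  qed
  have root: "h (u - h u / \<mu>) = 0" "u - h u / \<mu> < u"
      "h x \<ge> 0 \<longleftrightarrow> u - h u / \<mu> \<le> x" "h x \<le> 0 \<longleftrightarrow> x \<le> u - h u / \<mu>"
    if h: "\<And>x. h x = h u + \<mu> * (x - u)" "h u > 0" "\<mu> > 0" for h :: "real \<Rightarrow> real" and \<mu> x
  proof -
    define r where "r = u - h u / \<mu>"
    have "h x = \<mu> * (x - r)" for x using h(3) unfolding r_def by (subst h(1)) (simp add: field_simps)
    then show "h r = 0" "h x \<ge> 0 \<longleftrightarrow> r \<le> x" "h x \<le> 0 \<longleftrightarrow> x \<le> r"
      using h(3) by (simp_all add: zero_le_mult_iff mult_le_0_iff)
    show "r < u" using h(2,3) unfolding r_def by simp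
  qed
  consider "m > 0" "k > 0" | "m > 0" "k \<le> 0" | "m \<le> 0" by linarith
  then show ?thesis
  proof cases
    case 1
    define x where "x = max (u - f u / m) (u - g u / k)"
    have "v \<le> x" using assms(6) root[OF f assms(4) 1(1)] root[OF g assms(5) 1(2)] by (auto simp: x_def)
    moreover have "x < u" "f x \<ge> 0" "g x \<ge> 0" "f x = 0 \<or> g x = 0"
      using root[OF f assms(4) 1(1)] root[OF g assms(5) 1(2)] by (auto simp: x_def max_def)
    ultimately show ?thesis by auto
  next
    case 2
    have "f v \<le> 0" using assms(1,6) pos[OF g assms(5) 2(2), of v] by linarith
    then show ?thesis using root[OF f assms(4) 2(1)] pos[OF g assms(5) 2(2), of "u - f u / m"]
      by (intro bexI[of _ "u - f u / m"]) auto
  next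
    case 3
    have "g v \<le> 0" using assms(1,6) pos[OF f assms(4) 3, of v] by linarith
    then have "k > 0" using assms(1) pos[OF g assms(5), of v] by linarith
    then show ?thesis using root[OF g assms(5)] pos[OF f assms(4) 3, of "u - g u / k"] \<open>g v \<le> 0\<close>
      by (intro bexI[of _ "u - g u / k"]) auto
  qed
qed

lemma segment_leaves_wedge:
  assumes "fst a < fst c" "fst c < x" "x \<le> fst b" "x \<le> fst d" "x \<le> fst d'"
    and "line_at c (slope c d) x < line_at a (slope a b) x"
    and "line_at a (slope a b) x < line_at c (slope c d') x"
  shows "c \<in> open_seg a b \<or> open_seg a b \<inter> open_seg c d \<noteq> {} \<or> open_seg a b \<inter> open_seg c d' \<noteq> {}"
proof -
  define A where "A = line_at a (slope a b)"
  define D where "D = line_at c (slope c d)"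
  define D' where "D' = line_at c (slope c d')"
  have "D (fst c) = snd c" "D' (fst c) = snd c" unfolding D_def D'_def line_at_def by simp_all
  then have "A (fst c) - D (fst c) \<le> 0 \<or> D' (fst c) - A (fst c) \<le> 0" by linarith
  then obtain y where y: "y \<in> {fst c..<x}" "A y - D y \<ge> 0" "D' y - A y \<ge> 0" "A y - D y = 0 \<or> D' y - A y = 0"
    using affine_last_zero[of "fst c" x "\<lambda>y. A y - D y" "slope a b - slope c d" "\<lambda>y. D' y - A y" "slope c d' - slope a b"]
      assms(2,6,7) unfolding A_def D_def D'_def line_at_def by (force simp: algebra_simps)
  show ?thesis
  proof (cases "y = fst c")
    case True
    then have "A (fst c) = snd c" using y \<open>D (fst c) = snd c\<close> \<open>D' (fst c) = snd c\<close> by auto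
    then have "c \<in> open_seg a b" unfolding open_seg_def A_def using assms(1-3) by auto
    then show ?thesis by blast
  next
    case False
    then have "fst c < y" "y < x" using y(1) by auto
    then have "(y, A y) \<in> open_seg a b" "A y = D y \<longrightarrow> (y, A y) \<in> open_seg c d" "A y = D' y \<longrightarrow> (y, A y) \<in> open_seg c d'"
      unfolding open_seg_def A_def D_def D'_def using assms(1-5) by auto
    then show ?thesis using y(4) by auto
  qed
qed

lemma wedge_side_inside_open_wedge:
  assumes "fst a < fst c" "fst c < fst p"
    and "c \<notin> wedge a s t" "p \<in> open_wedge a s t" "p \<in> open_wedge c s' t'"
  shows "\<exists>x. fst c < x \<and> x < fst p \<and>
           (\<exists>r\<in>{s, t}. line_at c s' x < line_at a r x \<and> line_at a r x < line_at c t' x)"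
proof -
  define M where "M = line_at c (slope c p)"
  have "M (fst c) = snd c" "M (fst p) = snd p" using assms(2) unfolding M_def line_at_def slope_def by simp_all
  then obtain y where y: "y \<in> {fst c..<fst p}" "M y - line_at a s y \<ge> 0" "line_at a t y - M y \<ge> 0"
      "M y - line_at a s y = 0 \<or> line_at a t y - M y = 0"
    using affine_last_zero[of "fst c" "fst p" "\<lambda>y. M y - line_at a s y" "slope c p - s" "\<lambda>y. line_at a t y - M y" "t - slope c p"]
      assms unfolding M_def wedge_def open_wedge_def line_at_def by (force simp: algebra_simps)
  have "y \<noteq> fst c" using y(2,3) assms(1,3) \<open>M (fst c) = snd c\<close> unfolding wedge_def by auto
  then have cy: "fst c < y" using y(1) by simp
  have "s' < slope c p" "slope c p < t'" using assms(5) by (simp_all add: open_wedge_iff_slope)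
  then have "line_at c s' y < M y" "M y < line_at c t' y"
    using cy unfolding M_def line_at_def by (simp_all add: mult_strict_right_mono)
  then show ?thesis using y cy by (intro exI[of _ y]) auto
qed

section \<open>Plane straight-line graphs\<close>

lemma card_le_2_if_no_three:
  assumes "finite F" "\<And>x y z. x \<in> F \<Longrightarrow> y \<in> F \<Longrightarrow> z \<in> F \<Longrightarrow> x = y \<or> x = z \<or> y = z"
  shows "card F \<le> 2"
proof (rule ccontr)
  assume "\<not> card F \<le> 2"
  then obtain T where "T \<subseteq> F" "card T = 3" using obtain_subset_with_card_n[of 3 F] by auto
  then obtain x y z where "{x, y, z} \<subseteq> F" "x \<noteq> y" "y \<noteq> z" "x \<noteq> z" by (auto simp: card_3_iff)
  then show False using assms(2)[of x y z] by auto
qed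

lemma disjoint_open_intervals:
  fixes l h l' h' :: real
  assumes "l < h" "l' < h'" "{l<..<h} \<inter> {l'<..<h'} = {}"
  shows "h \<le> l' \<or> h' \<le> l"
proof (rule ccontr)
  assume "\<not> (h \<le> l' \<or> h' \<le> l)"
  then have "(max l l' + min h h') / 2 \<in> {l<..<h} \<inter> {l'<..<h'}" using assms(1,2) by auto
  then show False using assms(3) by blast
qed

lemma three_intervals_no_common_point:
  fixes y :: real
  assumes "l1 < h1" "l2 < h2" "l3 < h3" "y \<in> {l1..h1}" "y \<in> {l2..h2}" "y \<in> {l3..h3}"
    and "{l1<..<h1} \<inter> {l2<..<h2} = {}" "{l1<..<h1} \<inter> {l3<..<h3} = {}" "{l2<..<h2} \<inter> {l3<..<h3} = {}"
  shows False
  using disjoint_open_intervals[OF assms(1,2,7)] disjoint_open_intervals[OF assms(1,3,8)]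
    disjoint_open_intervals[OF assms(2,3,9)] assms(1-6)
  by auto

locale straight_graph =
  fixes V :: "point set" and E :: "(point \<times> point) set"
  assumes finite_V: "finite V" and inj_on_fst_V: "inj_on fst V" and edges: "E \<subseteq> V \<times> V"
    and edge_fst_less: "(a, b) \<in> E \<Longrightarrow> fst a < fst b"
    and vertex_not_on_edge: "(a, b) \<in> E \<Longrightarrow> v \<in> V \<Longrightarrow> v \<notin> open_seg a b"

locale plane_graph = straight_graph +
  assumes edges_disjoint:
    "(a, b) \<in> E \<Longrightarrow> (c, d) \<in> E \<Longrightarrow> (a, b) \<noteq> (c, d) \<Longrightarrow> open_seg a b \<inter> open_seg c d = {}"

context straight_graph
begin

lemma finite_E: "finite E"
  using edges finite_V finite_subset by blast

lemma edge_in_V: "(a, b) \<in> E \<Longrightarrow> a \<in> V \<and> b \<in> V"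
  using edges by auto

lemma edge_slope_inj:
  assumes "(a, b) \<in> E" "(a, c) \<in> E" "slope a b = slope a c"
  shows "b = c"
proof (rule ccontr)
  assume "b \<noteq> c"
  moreover have "b \<in> V" "c \<in> V" using edge_in_V assms by auto
  ultimately have "fst b \<noteq> fst c" using inj_on_fst_V inj_on_def by metis
  moreover have "fst a < fst b" "fst a < fst c" using edge_fst_less assms by auto
  moreover have "line_at a (slope a b) (fst b) = snd b" "line_at a (slope a c) (fst c) = snd c"
    using calculation by (simp_all add: line_at_slope)
  ultimately have "b \<in> open_seg a c \<or> c \<in> open_seg a b"
    using assms(3) unfolding open_seg_def by auto
  then show False using vertex_not_on_edge assms \<open>b \<in> V\<close> \<open>c \<in> V\<close> by blast
qed

definition wedges :: "(point \<times> point \<times> point) set" where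
  "wedges = {(a, b, b'). (a, b) \<in> E \<and> (a, b') \<in> E \<and> slope a b < slope a b' \<and>
     \<not> (\<exists>c. (a, c) \<in> E \<and> slope a b < slope a c \<and> slope a c < slope a b')}"

lemma finite_wedges: "finite wedges"
proof -
  have "wedges \<subseteq> (\<lambda>((a, b), (_, b')). (a, b, b')) ` (E \<times> E)"
    unfolding wedges_def by (force simp: image_iff)
  then show ?thesis using finite_E finite_subset by blast
qed

lemma card_E_le_card_V_plus_wedges: "card E \<le> card V + card wedges"
proof -
  define top where "top = {(a, b) \<in> E. \<forall>c. (a, c) \<in> E \<longrightarrow> slope a c \<le> slope a b}"
  have "inj_on fst top"
  proof (rule inj_onI)
    fix e e' assume e: "e \<in> top" "e' \<in> top" "fst e = fst e'"
    obtain a b b' where ab: "e = (a, b)" "e' = (a, b')" using e(3) by (metis prod.collapse)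
    then have "(a, b) \<in> E" "(a, b') \<in> E" "slope a b' \<le> slope a b" "slope a b \<le> slope a b'"
      using e(1,2) unfolding top_def by auto
    then show "e = e'" using ab edge_slope_inj by (metis order_antisym)
  qed
  moreover have "fst ` top \<subseteq> V" unfolding top_def using edges by auto
  ultimately have top: "card top \<le> card V" using finite_V by (metis card_image card_mono)
  have "E - top \<subseteq> (\<lambda>(a, b, b'). (a, b)) ` wedges"
  proof
    fix e assume e: "e \<in> E - top"
    obtain a b where ab: "e = (a, b)" by (cases e)
    then have "(a, b) \<in> E" using e by simp
    define S where "S = {c. (a, c) \<in> E \<and> slope a b < slope a c}"
    have "S \<noteq> {}" using e ab unfolding S_def top_def by fastforce
    moreover have "S \<subseteq> snd ` E" unfolding S_def by force
    then have "finite S" using finite_E finite_subset by blast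
    ultimately have "arg_min_on (slope a) S \<in> S" "\<not> (\<exists>c\<in>S. slope a c < slope a (arg_min_on (slope a) S))"
      using arg_min_if_finite by blast+
    then have "(a, b, arg_min_on (slope a) S) \<in> wedges"
      using \<open>(a, b) \<in> E\<close> unfolding wedges_def S_def by auto
    then show "e \<in> (\<lambda>(a, b, b'). (a, b)) ` wedges" using ab by force
  qed
  then have "card (E - top) \<le> card wedges"
    using finite_wedges card_image_le card_mono finite_imageI le_trans by meson
  moreover have "top \<subseteq> E" unfolding top_def by auto
  then have "card E \<le> card top + card (E - top)"
    using card_Diff_subset[OF finite_subset[OF _ finite_E]] card_mono[OF finite_E] by fastforce
  ultimately show ?thesis using top by linarith
qed

definition closer :: "point \<times> point \<times> point \<Rightarrow> point" where
  "closer = (\<lambda>(a, b, b'). arg_min_on fst (V \<inter> wedge a (slope a b) (slope a b')))"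

lemma wedge_closer:
  assumes "(a, b, b') \<in> wedges"
  defines "W \<equiv> V \<inter> wedge a (slope a b) (slope a b')"
  shows "b \<in> W" "b' \<in> W" "closer (a, b, b') \<in> W" "u \<in> W \<Longrightarrow> fst (closer (a, b, b')) \<le> fst u"
proof -
  have E: "(a, b) \<in> E" "(a, b') \<in> E" and s: "slope a b < slope a b'" using assms unfolding wedges_def by auto
  have ab: "fst a < fst b" "fst a < fst b'" using E edge_fst_less by auto
  have "line_at a (slope a b) (fst b) = snd b" "line_at a (slope a b') (fst b') = snd b'"
    using ab by (simp_all add: line_at_slope)
  moreover have "line_at a (slope a b) (fst b) \<le> line_at a (slope a b') (fst b)"
    "line_at a (slope a b) (fst b') \<le> line_at a (slope a b') (fst b')"
    using s ab unfolding line_at_def by auto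
  moreover have "b \<in> V" "b' \<in> V" using E edge_in_V by auto
  ultimately show b: "b \<in> W" "b' \<in> W" using ab unfolding W_def wedge_def by auto
  have "finite W" "W \<noteq> {}" using finite_V b(1) unfolding W_def by auto
  moreover have "closer (a, b, b') = arg_min_on fst W" unfolding closer_def W_def by simp
  ultimately show "closer (a, b, b') \<in> W" "u \<in> W \<Longrightarrow> fst (closer (a, b, b')) \<le> fst u"
    using arg_min_if_finite(1) arg_min_least by metis+
qed

end

context plane_graph
begin

text \<open>
  If c were right of a, a side of the wedge at a would run through the open wedge at c (c itself
  lies outside the wedge at a, being left of its closer) and, followed leftwards, would hit c or
  cross a side of the wedge at c.
\<close>

lemma wedges_apex_not_left:
  assumes g: "(a, b, b') \<in> wedges" and h: "(c, d, d') \<in> wedges"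
    and w: "closer (a, b, b') = closer (c, d, d')"
    and pg: "p \<in> open_wedge a (slope a b) (slope a b')" and ph: "p \<in> open_wedge c (slope c d) (slope c d')"
    and "fst p \<le> fst (closer (a, b, b'))"
  shows "\<not> fst a < fst c"
proof
  assume ac: "fst a < fst c"
  define X where "X = fst (closer (a, b, b'))"
  have X: "X \<le> fst b" "X \<le> fst b'" "X \<le> fst d" "X \<le> fst d'"
    using wedge_closer(1,2,4)[OF g] wedge_closer(1,2,4)[OF h] w unfolding X_def by auto
  have "(c, d) \<in> E" "(c, d') \<in> E" and E: "(a, b) \<in> E" "(a, b') \<in> E"
    using g h unfolding wedges_def by auto
  then have "c \<in> V" using edge_in_V by blast
  have cp: "fst c < fst p" using ph unfolding open_wedge_def by simp
  have "c \<notin> wedge a (slope a b) (slope a b')"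
    using wedge_closer(4)[OF g, of c] \<open>c \<in> V\<close> cp \<open>fst p \<le> fst (closer (a, b, b'))\<close> by force
  then obtain x r where x: "fst c < x" "x < fst p" "r \<in> {slope a b, slope a b'}"
    "line_at c (slope c d) x < line_at a r x" "line_at a r x < line_at c (slope c d') x"
    using wedge_side_inside_open_wedge[OF ac cp _ pg ph] by blast
  then obtain b0 where "b0 \<in> {b, b'}" "r = slope a b0" by blast
  then have b0: "(a, b0) \<in> E" "r = slope a b0" "X \<le> fst b0" using E X by auto
  have "c \<in> open_seg a b0 \<or> open_seg a b0 \<inter> open_seg c d \<noteq> {} \<or> open_seg a b0 \<inter> open_seg c d' \<noteq> {}"
    using segment_leaves_wedge[OF ac x(1), of b0 d d'] x b0 X \<open>fst p \<le> fst (closer (a, b, b'))\<close>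
    unfolding X_def by auto
  moreover have "a \<noteq> c" using ac by auto
  ultimately show False
    using vertex_not_on_edge[OF b0(1) \<open>c \<in> V\<close>] edges_disjoint[OF b0(1)] \<open>(c, d) \<in> E\<close> \<open>(c, d') \<in> E\<close> by blast
qed

lemma wedges_eq_if_open_wedges_meet:
  assumes g: "(a, b, b') \<in> wedges" and h: "(c, d, d') \<in> wedges"
    and w: "closer (a, b, b') = closer (c, d, d')"
    and pg: "p \<in> open_wedge a (slope a b) (slope a b')" and ph: "p \<in> open_wedge c (slope c d) (slope c d')"
    and pX: "fst p \<le> fst (closer (a, b, b'))"
  shows "(a, b, b') = (c, d, d')"
proof -
  have "(a, b) \<in> E" "(c, d) \<in> E" using g h unfolding wedges_def by auto
  then have "a \<in> V" "c \<in> V" using edge_in_V by blast+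
  moreover have "\<not> fst a < fst c" "\<not> fst c < fst a"
    using wedges_apex_not_left[OF g h w pg ph pX] wedges_apex_not_left[OF h g w[symmetric] ph pg] pX w by auto
  ultimately have "a = c" using inj_on_fst_V by (metis inj_onD linorder_neqE_linordered_idom)
  have gE: "(a, b) \<in> E" "(a, b') \<in> E" "\<And>e. (a, e) \<in> E \<Longrightarrow> \<not> (slope a b < slope a e \<and> slope a e < slope a b')"
    using g unfolding wedges_def by auto
  have hE: "(a, d) \<in> E" "(a, d') \<in> E" "\<And>e. (a, e) \<in> E \<Longrightarrow> \<not> (slope a d < slope a e \<and> slope a e < slope a d')"
    using h \<open>a = c\<close> unfolding wedges_def by auto
  have "slope a b < slope a p" "slope a p < slope a b'" "slope a d < slope a p" "slope a p < slope a d'"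
    using pg ph \<open>a = c\<close> by (auto simp: open_wedge_iff_slope)
  then have "slope a b = slope a d" "slope a b' = slope a d'"
    using gE(3)[OF hE(1)] gE(3)[OF hE(2)] hE(3)[OF gE(1)] hE(3)[OF gE(2)] by fastforce+
  then show ?thesis using edge_slope_inj gE hE \<open>a = c\<close> by metis
qed

text \<open>
  The wedges closed by w cut pairwise disjoint open intervals out of the vertical line through w,
  and snd w lies in the closure of each of them.
\<close>

lemma card_wedges_closed_by: "card {g \<in> wedges. closer g = w} \<le> 2"
proof -
  define F where "F = {g \<in> wedges. closer g = w}"
  define lo where "lo = (\<lambda>(a, b, b' :: point). line_at a (slope a b) (fst w))"
  define hi where "hi = (\<lambda>(a, b :: point, b'). line_at a (slope a b') (fst w))"
  define ow where "ow = (\<lambda>(a, b, b'). open_wedge a (slope a b) (slope a b'))"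
  have cut: "lo g < hi g" "snd w \<in> {lo g..hi g}" "\<And>y. y \<in> {lo g<..<hi g} \<Longrightarrow> (fst w, y) \<in> ow g"
    if "g \<in> F" for g
  proof -
    obtain a b b' where g: "g = (a, b, b')" by (metis prod_cases3)
    then have "(a, b, b') \<in> wedges" "closer (a, b, b') = w" using that unfolding F_def by auto
    then have "w \<in> wedge a (slope a b) (slope a b')" and "slope a b < slope a b'"
      using wedge_closer(3)[of a b b'] unfolding wedges_def by auto
    then show "lo g < hi g" "snd w \<in> {lo g..hi g}" "\<And>y. y \<in> {lo g<..<hi g} \<Longrightarrow> (fst w, y) \<in> ow g"
      unfolding g lo_def hi_def ow_def wedge_def open_wedge_def line_at_def by auto
  qed
  have disjoint: "{lo g<..<hi g} \<inter> {lo g'<..<hi g'} = {}" if "g \<in> F" "g' \<in> F" "g \<noteq> g'" for g g'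
  proof -
    obtain a b b' c d d' where g: "g = (a, b, b')" "g' = (c, d, d')" by (metis prod_cases3)
    have "(a, b, b') \<in> wedges" "(c, d, d') \<in> wedges" "closer (a, b, b') = w" "closer (c, d, d') = w"
      using that unfolding F_def g by auto
    then show ?thesis
      using cut(3)[OF that(1)] cut(3)[OF that(2)] wedges_eq_if_open_wedges_meet[of a b b' c d d']
        that(3) unfolding g ow_def by fastforce
  qed
  have "card F \<le> 2"
  proof (rule card_le_2_if_no_three)
    show "finite F" using finite_wedges unfolding F_def by simp
    fix g1 g2 g3 assume "g1 \<in> F" "g2 \<in> F" "g3 \<in> F"
    then show "g1 = g2 \<or> g1 = g3 \<or> g2 = g3"
      using three_intervals_no_common_point[of "lo g1" "hi g1" "lo g2" "hi g2" "lo g3" "hi g3" "snd w"]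
        cut(1,2) disjoint by blast
  qed
  then show ?thesis unfolding F_def .
qed

lemma card_wedges_le: "card wedges \<le> 2 * card V"
proof -
  have "wedges \<subseteq> (\<Union>w\<in>V. {g \<in> wedges. closer g = w})"
  proof
    fix g assume "g \<in> wedges"
    moreover obtain a b b' where "g = (a, b, b')" by (metis prod_cases3)
    ultimately have "closer g \<in> V" using wedge_closer(3) by blast
    then show "g \<in> (\<Union>w\<in>V. {g \<in> wedges. closer g = w})" using \<open>g \<in> wedges\<close> by blast
  qed
  then have "card wedges \<le> card (\<Union>w\<in>V. {g \<in> wedges. closer g = w})"
    using finite_V finite_wedges by (intro card_mono) auto
  also have "\<dots> \<le> (\<Sum>w\<in>V. card {g \<in> wedges. closer g = w})" by (rule card_UN_le[OF finite_V])
  also have "\<dots> \<le> (\<Sum>w\<in>V. 2)" by (rule sum_mono) (rule card_wedges_closed_by)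
  finally show ?thesis by simp
qed

theorem card_E_le: "card E \<le> 3 * card V"
  using card_E_le_card_V_plus_wedges card_wedges_le by linarith

end

section \<open>The crossing lemma\<close>

text \<open>Crossings are ordered pairs, so every crossing is counted twice.\<close>

definition crossings :: "(point \<times> point) set \<Rightarrow> ((point \<times> point) \<times> (point \<times> point)) set" where
  "crossings E = {(e, e') \<in> E \<times> E. e \<noteq> e' \<and> open_seg (fst e) (snd e) \<inter> open_seg (fst e') (snd e') \<noteq> {}}"

lemma finite_crossings: "finite E \<Longrightarrow> finite (crossings E)"
  by (rule finite_subset[of _ "E \<times> E"]) (auto simp: crossings_def)

lemma straight_graph_induced:
  assumes "straight_graph V E" "S \<subseteq> V"
  shows "straight_graph S {(a, b) \<in> E. a \<in> S \<and> b \<in> S}"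
proof
  interpret straight_graph V E by (rule assms(1))
  show "finite S" using finite_V assms(2) finite_subset by blast
  show "inj_on fst S" using inj_on_fst_V assms(2) inj_on_subset by blast
  show "{(a, b) \<in> E. a \<in> S \<and> b \<in> S} \<subseteq> S \<times> S" by blast
  show "fst a < fst b" if "(a, b) \<in> {(a, b) \<in> E. a \<in> S \<and> b \<in> S}" for a b
    using that edge_fst_less by blast
  show "v \<notin> open_seg a b" if "(a, b) \<in> {(a, b) \<in> E. a \<in> S \<and> b \<in> S}" "v \<in> S" for a b v
    using that assms(2) vertex_not_on_edge by blast
qed

lemma (in straight_graph) card_E_le_crossings: "card E \<le> 3 * card V + card (crossings E)"
proof -
  define R where "R = fst ` crossings E"
  interpret plane: plane_graph V "E - R"
  proof (rule plane_graph.intro)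
    show "straight_graph V (E - R)" using straight_graph_axioms unfolding straight_graph_def by blast
    show "plane_graph_axioms (E - R)"
    proof
      fix a b c d assume ab: "(a, b) \<in> E - R" and cd: "(c, d) \<in> E - R" and "(a, b) \<noteq> (c, d)"
      show "open_seg a b \<inter> open_seg c d = {}"
      proof (rule ccontr)
        assume "open_seg a b \<inter> open_seg c d \<noteq> {}"
        then have "((a, b), (c, d)) \<in> crossings E" using ab cd \<open>(a, b) \<noteq> (c, d)\<close> unfolding crossings_def by auto
        then have "(a, b) \<in> R" unfolding R_def by (rule image_eqI[rotated]) simp
        then show False using ab by blast
      qed
    qed
  qed
  have "card E \<le> card ((E - R) \<union> R)"
    using finite_E finite_crossings[OF finite_E] unfolding R_def by (intro card_mono) auto
  also have "\<dots> \<le> card (E - R) + card R" by (rule card_Un_le)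
  finally have "card E \<le> card (E - R) + card R" .
  moreover have "card R \<le> card (crossings E)" unfolding R_def by (rule card_image_le[OF finite_crossings[OF finite_E]])
  ultimately show ?thesis using plane.card_E_le by linarith
qed

text \<open>
  Expectations over a random subset S of V containing each vertex independently with
  probability p, written as weighted sums over Pow V.
\<close>

lemma sum_subset_weights_superset:
  fixes p :: real
  assumes "finite V" "A \<subseteq> V"
  shows "(\<Sum>S\<in>Pow V. p ^ card S * (1 - p) ^ card (V - S) * of_bool (A \<subseteq> S)) = p ^ card A"
proof -
  define q where "q x = (if x \<in> A then 0 else 1 - p)" for x
  have "(\<Sum>S\<in>Pow V. (\<Prod>x\<in>S. p) * (\<Prod>x\<in>V - S. q x)) = (\<Prod>x\<in>V. p + q x)"
    by (rule prod_add[OF assms(1), symmetric])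
  also have "\<dots> = (\<Prod>x\<in>V. if x \<in> A then p else 1)" unfolding q_def by (rule prod.cong) auto
  also have "\<dots> = p ^ card A"
    using assms by (simp add: prod.If_cases Int_absorb1)
  finally have sum: "(\<Sum>S\<in>Pow V. (\<Prod>x\<in>S. p) * (\<Prod>x\<in>V - S. q x)) = p ^ card A" .
  have weight: "(\<Prod>x\<in>V - S. q x) = (1 - p) ^ card (V - S) * of_bool (A \<subseteq> S)" if "S \<in> Pow V" for S
  proof (cases "A \<subseteq> S")
    case True
    then have "(\<Prod>x\<in>V - S. q x) = (\<Prod>x\<in>V - S. 1 - p)" unfolding q_def by (intro prod.cong) auto
    then show ?thesis using True by simp
  next
    case False
    then have "\<exists>x\<in>V - S. q x = 0" using assms(2) unfolding q_def by auto
    then show ?thesis using False assms(1) by (simp add: prod_zero)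
  qed
  have "(\<Sum>S\<in>Pow V. p ^ card S * (1 - p) ^ card (V - S) * of_bool (A \<subseteq> S))
      = (\<Sum>S\<in>Pow V. (\<Prod>x\<in>S. p) * (\<Prod>x\<in>V - S. q x))"
    using weight by (intro sum.cong) (simp_all add: mult.assoc)
  then show ?thesis using sum by simp
qed

lemma sum_subset_weights_count:
  fixes p :: real and X :: "'b set" and ends :: "'b \<Rightarrow> 'a set"
  assumes "finite V" "finite X" "\<And>x. x \<in> X \<Longrightarrow> ends x \<subseteq> V \<and> card (ends x) = k"
  shows "(\<Sum>S\<in>Pow V. p ^ card S * (1 - p) ^ card (V - S) * card {x \<in> X. ends x \<subseteq> S}) = p ^ k * card X"
proof -
  have "card {x \<in> X. ends x \<subseteq> S} = (\<Sum>x\<in>X. of_bool (ends x \<subseteq> S) :: real)" for S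
    using assms(2) by (simp add: sum.If_cases Int_def)
  then have "(\<Sum>S\<in>Pow V. p ^ card S * (1 - p) ^ card (V - S) * card {x \<in> X. ends x \<subseteq> S})
      = (\<Sum>x\<in>X. \<Sum>S\<in>Pow V. p ^ card S * (1 - p) ^ card (V - S) * of_bool (ends x \<subseteq> S))"
    by (simp add: sum_distrib_left sum.swap[of _ X])
  also have "\<dots> = (\<Sum>x\<in>X. p ^ k)"
  proof (rule sum.cong[OF refl])
    fix x assume "x \<in> X"
    then show "(\<Sum>S\<in>Pow V. p ^ card S * (1 - p) ^ card (V - S) * of_bool (ends x \<subseteq> S)) = p ^ k"
      using sum_subset_weights_superset[OF assms(1), of "ends x" p] assms(3) by simp
  qed
  finally show ?thesis by simp
qed

lemma open_seg_slope:
  assumes "z \<in> open_seg a b"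
  shows "slope a z = slope a b" "slope z b = slope a b"
proof -
  have z: "fst a < fst z" "fst z < fst b" "snd z = snd a + slope a b * (fst z - fst a)"
    using assms unfolding open_seg_def line_at_def by auto
  then show "slope a z = slope a b" unfolding slope_def by simp
  have "snd b - snd a = slope a b * (fst b - fst a)" using z(1,2) unfolding slope_def by simp
  then show "slope z b = slope a b" using z unfolding slope_def by (simp add: field_simps)
qed

lemma in_open_seg_if_slope_to_end:
  assumes "fst a < fst c" "fst c < fst b" "slope c b = slope a b"
  shows "c \<in> open_seg a b"
proof -
  have "snd b - snd c = slope a b * (fst b - fst c)" "snd b - snd a = slope a b * (fst b - fst a)"
    using assms unfolding slope_def by (auto simp: field_simps)
  then show ?thesis using assms(1,2) unfolding open_seg_def line_at_def by (auto simp: algebra_simps)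
qed

lemma (in straight_graph) card_crossing_endpoints:
  assumes "((a, b), (c, d)) \<in> crossings E"
  shows "card {a, b, c, d} = 4"
proof -
  have ab: "(a, b) \<in> E" and cd: "(c, d) \<in> E" and ne: "(a, b) \<noteq> (c, d)"
    and "open_seg a b \<inter> open_seg c d \<noteq> {}"
    using assms unfolding crossings_def by auto
  then obtain z where z: "z \<in> open_seg a b" "z \<in> open_seg c d" by blast
  then have zx: "fst a < fst z" "fst z < fst b" "fst c < fst z" "fst z < fst d"
    unfolding open_seg_def by auto
  have V: "a \<in> V" "b \<in> V" "c \<in> V" "d \<in> V" using ab cd edge_in_V by auto
  have "a \<noteq> c"
  proof
    assume "a = c"
    then have "slope a b = slope a d" using open_seg_slope(1)[OF z(1)] open_seg_slope(1)[OF z(2)] by simp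
    then show False using edge_slope_inj ab cd ne \<open>a = c\<close> by blast
  qed
  moreover have "b \<noteq> d"
  proof
    assume "b = d"
    then have s: "slope c b = slope a b" using open_seg_slope(2)[OF z(1)] open_seg_slope(2)[OF z(2)] by simp
    have "fst a \<noteq> fst c" using \<open>a \<noteq> c\<close> V inj_on_fst_V by (metis inj_onD)
    then have "c \<in> open_seg a b \<or> a \<in> open_seg c d"
      using in_open_seg_if_slope_to_end[of a c b] in_open_seg_if_slope_to_end[of c a d] s zx \<open>b = d\<close>
      by (cases "fst a < fst c") auto
    then show False using vertex_not_on_edge ab cd V by blast
  qed
  moreover have "a \<noteq> b" "c \<noteq> d" using edge_fst_less[OF ab] edge_fst_less[OF cd] by auto
  moreover have "a \<noteq> d" "b \<noteq> c" using zx by auto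
  ultimately show ?thesis by auto
qed

lemma (in straight_graph) crossing_sampling:
  fixes p :: real
  assumes "0 \<le> p" "p \<le> 1"
  shows "p ^ 2 * card E \<le> 3 * p * card V + p ^ 4 * card (crossings E)"
proof -
  define w where "w S = p ^ card S * (1 - p) ^ card (V - S)" for S
  define ends2 where "ends2 = (\<lambda>(a :: point, b :: point). {a, b})"
  define ends4 where "ends4 = (\<lambda>((a :: point, b :: point), (c :: point, d :: point)). {a, b, c, d})"
  let ?cE = "\<lambda>S. real (card {e \<in> E. ends2 e \<subseteq> S})"
  let ?cV = "\<lambda>S. real (card {v \<in> V. {v} \<subseteq> S})"
  let ?cC = "\<lambda>S. real (card {q \<in> crossings E. ends4 q \<subseteq> S})"
  have induced: "?cE S \<le> 3 * ?cV S + ?cC S" if "S \<in> Pow V" for S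
  proof -
    interpret G: straight_graph S "{(a, b) \<in> E. a \<in> S \<and> b \<in> S}"
      using straight_graph_induced straight_graph_axioms that by blast
    have "{e \<in> E. ends2 e \<subseteq> S} = {(a, b) \<in> E. a \<in> S \<and> b \<in> S}" by (auto simp: ends2_def)
    moreover have "{v \<in> V. {v} \<subseteq> S} = S" using that by auto
    moreover have "{q \<in> crossings E. ends4 q \<subseteq> S} = crossings {(a, b) \<in> E. a \<in> S \<and> b \<in> S}"
      by (auto simp: ends4_def crossings_def)
    ultimately show ?thesis using G.card_E_le_crossings by (simp flip: of_nat_mult of_nat_add)
  qed
  have "(\<Sum>S\<in>Pow V. w S * ?cE S) \<le> (\<Sum>S\<in>Pow V. w S * (3 * ?cV S + ?cC S))"
    using induced assms by (intro sum_mono mult_left_mono) (auto simp: w_def)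
  also have "\<dots> = 3 * (\<Sum>S\<in>Pow V. w S * ?cV S) + (\<Sum>S\<in>Pow V. w S * ?cC S)"
    by (simp add: algebra_simps sum.distrib sum_distrib_left)
  moreover have "ends2 e \<subseteq> V \<and> card (ends2 e) = 2" if "e \<in> E" for e
  proof -
    obtain a b where e: "e = (a, b)" by (cases e)
    then have "a \<noteq> b" using that edge_fst_less[of a b] by auto
    then show ?thesis using that e edge_in_V[of a b] by (auto simp: ends2_def)
  qed
  then have "(\<Sum>S\<in>Pow V. w S * ?cE S) = p ^ 2 * card E"
    unfolding w_def by (rule sum_subset_weights_count[OF finite_V finite_E])
  moreover have "(\<Sum>S\<in>Pow V. w S * ?cV S) = p ^ 1 * card V"
    unfolding w_def by (rule sum_subset_weights_count[OF finite_V finite_V]) simp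
  moreover have "ends4 q \<subseteq> V \<and> card (ends4 q) = 4" if "q \<in> crossings E" for q
  proof -
    obtain a b c d where q: "q = ((a, b), (c, d))" by (metis prod.collapse)
    then have "(a, b) \<in> E" "(c, d) \<in> E" using that unfolding crossings_def by auto
    then show ?thesis using that edge_in_V card_crossing_endpoints unfolding q ends4_def by auto
  qed
  then have "(\<Sum>S\<in>Pow V. w S * ?cC S) = p ^ 4 * card (crossings E)"
    unfolding w_def by (rule sum_subset_weights_count[OF finite_V finite_crossings[OF finite_E]])
  ultimately show ?thesis by (simp add: mult.assoc)
qed

theorem (in straight_graph) crossing_lemma:
  assumes "4 * card V \<le> card E"
  shows "card E ^ 3 \<le> 64 * card V ^ 2 * card (crossings E)"
proof (cases "E = {}")
  case False
  define e where "e = real (card E)"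
  define v where "v = real (card V)"
  define c where "c = real (card (crossings E))"
  have "e > 0" using False finite_E unfolding e_def by auto
  have "V \<noteq> {}" using False edges by auto
  then have "v > 0" using finite_V unfolding v_def by auto
  define p where "p = 4 * v / e"
  have "0 \<le> p" "p \<le> 1" using assms \<open>e > 0\<close> \<open>v > 0\<close> unfolding p_def e_def v_def by simp_all
  \<comment> \<open>For this p the vertex term 3 p v is three quarters of the edge term p^2 e.\<close>
  then have "p ^ 2 * e \<le> 3 * p * v + p ^ 4 * c"
    using crossing_sampling unfolding e_def v_def c_def by blast
  then have "16 * v ^ 2 / e \<le> 12 * v ^ 2 / e + 256 * v ^ 4 * c / e ^ 4"
    unfolding p_def using \<open>e > 0\<close> by (simp add: field_simps power2_eq_square power4_eq_xxxx)
  then have "4 * v ^ 2 * e ^ 3 \<le> 256 * v ^ 4 * c"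
    using \<open>e > 0\<close> by (simp add: field_simps power_def)
  then have "v ^ 2 * (4 * e ^ 3) \<le> v ^ 2 * (256 * v ^ 2 * c)" by (simp add: algebra_simps power_def)
  then have "4 * e ^ 3 \<le> 256 * v ^ 2 * c" using \<open>v > 0\<close> by (subst (asm) mult_le_cancel_left_pos) auto
  then have "e ^ 3 \<le> 64 * v ^ 2 * c" by (simp add: ac_simps)
  then have "real (card E ^ 3) \<le> real (64 * card V ^ 2 * card (crossings E))"
    unfolding e_def v_def c_def by simp
  then show ?thesis by (simp only: of_nat_le_iff)
qed simp

section \<open>Incidences between points and lines\<close>

lemma is_lineE:
  assumes "is_line l"
  obtains a b c where "a \<noteq> 0 \<or> b \<noteq> 0" "\<And>z. z \<in> l \<longleftrightarrow> a * fst z + b * snd z = c"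
proof -
  obtain a b c where "a \<noteq> 0 \<or> b \<noteq> 0" "l = {(x, y). a * x + b * y = c}" using assms unfolding is_line_def by blast
  then show ?thesis using that[of a b c] by (simp add: case_prod_beta)
qed

lemma open_seg_subset_line:
  assumes "is_line l" "p \<in> l" "q \<in> l"
  shows "open_seg p q \<subseteq> l"
proof
  fix z assume z: "z \<in> open_seg p q"
  obtain a b c where l: "\<And>z. z \<in> l \<longleftrightarrow> a * fst z + b * snd z = c" using is_lineE[OF assms(1)] by metis
  have "fst p < fst q" using z unfolding open_seg_def by auto
  have "a * (fst q - fst p) + b * (snd q - snd p) = 0" using assms(2,3) l by (simp add: algebra_simps)
  then have "a + b * slope p q = 0" using \<open>fst p < fst q\<close> unfolding slope_def by (simp add: field_simps)
  moreover have zs: "snd z = snd p + slope p q * (fst z - fst p)" using z unfolding open_seg_def line_at_def by simp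
  have "a * fst z + b * snd z - (a * fst p + b * snd p) = (a + b * slope p q) * (fst z - fst p)"
    unfolding zs by (simp add: algebra_simps)
  ultimately have "a * fst z + b * snd z = a * fst p + b * snd p" by simp
  then show "z \<in> l" using assms(2) l by simp
qed

lemma parallel_if_orthogonal:
  fixes a b u1 u2 v1 v2 :: real
  assumes "a \<noteq> 0 \<or> b \<noteq> 0" "a * u1 + b * u2 = 0" "a * v1 + b * v2 = 0"
  shows "u1 * v2 = u2 * v1"
proof -
  have "a * (u1 * v2 - u2 * v1) = v2 * (a * u1 + b * u2) - u2 * (a * v1 + b * v2)"
    "b * (u1 * v2 - u2 * v1) = u1 * (a * v1 + b * v2) - v1 * (a * u1 + b * u2)" by algebra+
  then show ?thesis using assms by auto
qed

lemma line_eq_if_two_points: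
  assumes "is_line l" "is_line l'" "p \<noteq> q" "p \<in> l" "q \<in> l" "p \<in> l'" "q \<in> l'"
  shows "l = l'"
proof -
  have "l \<subseteq> l'" if ll: "is_line l" "is_line l'" and pq: "p \<in> l" "q \<in> l" "p \<in> l'" "q \<in> l'" for l l'
  proof
    fix z assume "z \<in> l"
    obtain a b c where ab: "a \<noteq> 0 \<or> b \<noteq> 0" and l: "\<And>z. z \<in> l \<longleftrightarrow> a * fst z + b * snd z = c"
      using is_lineE[OF ll(1)] by metis
    obtain a' b' c' where ab': "a' \<noteq> 0 \<or> b' \<noteq> 0" and l': "\<And>z. z \<in> l' \<longleftrightarrow> a' * fst z + b' * snd z = c'"
      using is_lineE[OF ll(2)] by metis
    define u1 u2 v1 v2 where uv: "u1 = fst q - fst p" "u2 = snd q - snd p" "v1 = fst z - fst p" "v2 = snd z - snd p"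
    have uv0: "a * u1 + b * u2 = 0" "a * v1 + b * v2 = 0" "a' * u1 + b' * u2 = 0"
      using l l' pq \<open>z \<in> l\<close> unfolding uv by (simp_all add: algebra_simps)
    have "u1 * v2 = u2 * v1" using parallel_if_orthogonal[OF ab uv0(1,2)] .
    moreover have u: "u1 \<noteq> 0 \<or> u2 \<noteq> 0" using assms(3) unfolding uv by (auto simp: prod_eq_iff)
    moreover have "u1 * (a' * v1 + b' * v2) = v1 * (a' * u1 + b' * u2) + b' * (u1 * v2 - u2 * v1)"
      "u2 * (a' * v1 + b' * v2) = v2 * (a' * u1 + b' * u2) - a' * (u1 * v2 - u2 * v1)" by algebra+
    ultimately have "a' * v1 + b' * v2 = 0" using \<open>a' * u1 + b' * u2 = 0\<close> u by auto
    then show "z \<in> l'" using l' pq(3) unfolding uv by (simp add: algebra_simps)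
  qed
  from this[OF assms(1,2,4-7)] this[OF assms(2,1,6,7,4,5)] show ?thesis by blast
qed

definition line_edges :: "point set \<Rightarrow> point set \<Rightarrow> (point \<times> point) set" where
  "line_edges P l = {(p, q). p \<in> P \<inter> l \<and> q \<in> P \<inter> l \<and> fst p < fst q \<and>
     \<not> (\<exists>r\<in>P \<inter> l. fst p < fst r \<and> fst r < fst q)}"

definition consecutive_edges :: "point set \<Rightarrow> point set set \<Rightarrow> (point \<times> point) set" where
  "consecutive_edges P L = (\<Union>l\<in>L. line_edges P l)"

lemma finite_line_edges: "finite P \<Longrightarrow> finite (line_edges P l)"
  by (rule finite_subset[of _ "P \<times> P"]) (auto simp: line_edges_def)

lemma card_le_card_line_edges:
  assumes "finite P" "inj_on fst P"
  shows "card (P \<inter> l) \<le> card (line_edges P l) + 1"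
proof (cases "P \<inter> l = {}")
  case False
  define Q where "Q = P \<inter> l"
  have "finite Q" using assms(1) unfolding Q_def by simp
  have "Max (fst ` Q) \<in> fst ` Q" using \<open>finite Q\<close> False unfolding Q_def by simp
  then obtain m where "m \<in> Q" "fst m = Max (fst ` Q)" by auto
  then have m_max: "fst r \<le> fst m" if "r \<in> Q" for r using \<open>finite Q\<close> that by simp
  have "Q - {m} \<subseteq> fst ` line_edges P l"
  proof
    fix p assume p: "p \<in> Q - {m}"
    define S where "S = {r \<in> Q. fst p < fst r}"
    have "fst p \<noteq> fst m" using p \<open>m \<in> Q\<close> assms(2) inj_on_subset[of fst P Q] unfolding Q_def by (auto dest: inj_onD)
    moreover have "\<not> fst m < fst p" using m_max[of p] p by simp
    ultimately have "m \<in> S" using \<open>m \<in> Q\<close> unfolding S_def by auto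
    moreover have "finite S" using \<open>finite Q\<close> unfolding S_def by simp
    ultimately have "arg_min_on fst S \<in> S" "\<not> (\<exists>r\<in>S. fst r < fst (arg_min_on fst S))"
      using arg_min_if_finite by blast+
    then have "(p, arg_min_on fst S) \<in> line_edges P l"
      using p unfolding line_edges_def S_def Q_def by auto
    then show "p \<in> fst ` line_edges P l" by force
  qed
  then have "card (Q - {m}) \<le> card (line_edges P l)"
    using finite_line_edges[OF assms(1)] by (meson card_image_le card_mono finite_imageI le_trans)
  then show ?thesis using \<open>finite Q\<close> \<open>m \<in> Q\<close> unfolding Q_def by (simp add: card_Diff_singleton)
qed simp

lemma line_edges_disjoint:
  assumes "is_line l" "is_line l'" "l \<noteq> l'"
  shows "line_edges P l \<inter> line_edges P l' = {}"
proof -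
  have "p \<noteq> q" if "(p, q) \<in> line_edges P l" for p q using that unfolding line_edges_def by auto
  then show ?thesis using line_eq_if_two_points[OF assms(1,2)] assms(3) unfolding line_edges_def by blast
qed

lemma card_incidences:
  assumes "finite P" "finite L"
  shows "card (incidences P L) = (\<Sum>l\<in>L. card (P \<inter> l))"
proof -
  have "incidences P L = (\<lambda>(l, p). (p, l)) ` (SIGMA l:L. P \<inter> l)"
    unfolding incidences_def by (auto simp: image_iff)
  moreover have "inj_on (\<lambda>(l, p). (p, l)) (SIGMA l:L. P \<inter> l)" by (auto simp: inj_on_def)
  ultimately show ?thesis using assms by (simp add: card_image card_SigmaI)
qed

lemma card_incidences_le_consecutive_edges:
  assumes "finite P" "inj_on fst P" "finite L" "\<forall>l\<in>L. is_line l"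
  shows "card (incidences P L) \<le> card (consecutive_edges P L) + card L"
proof -
  have "card (incidences P L) = (\<Sum>l\<in>L. card (P \<inter> l))" by (rule card_incidences[OF assms(1,3)])
  also have "\<dots> \<le> (\<Sum>l\<in>L. card (line_edges P l) + 1)"
    by (rule sum_mono) (rule card_le_card_line_edges[OF assms(1,2)])
  also have "\<dots> = (\<Sum>l\<in>L. card (line_edges P l)) + card L" by (subst sum.distrib) simp
  also have "(\<Sum>l\<in>L. card (line_edges P l)) = card (consecutive_edges P L)"
    unfolding consecutive_edges_def using assms(3,4) finite_line_edges[OF assms(1)] line_edges_disjoint
    by (intro card_UN_disjoint[symmetric]) auto
  finally show ?thesis .
qed

lemma straight_graph_consecutive_edges:
  assumes "finite P" "inj_on fst P" "\<forall>l\<in>L. is_line l"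
  shows "straight_graph P (consecutive_edges P L)"
proof
  show "consecutive_edges P L \<subseteq> P \<times> P" unfolding consecutive_edges_def line_edges_def by auto
  show "fst a < fst b" if "(a, b) \<in> consecutive_edges P L" for a b
    using that unfolding consecutive_edges_def line_edges_def by auto
  show "v \<notin> open_seg a b" if ab: "(a, b) \<in> consecutive_edges P L" and "v \<in> P" for a b v
  proof
    assume v: "v \<in> open_seg a b"
    obtain l where l: "l \<in> L" "(a, b) \<in> line_edges P l" using ab unfolding consecutive_edges_def by blast
    then have "v \<in> l" using open_seg_subset_line[of l a b] v assms(3) unfolding line_edges_def by auto
    then show False using l(2) v \<open>v \<in> P\<close> unfolding line_edges_def open_seg_def by auto
  qed
qed (use assms in auto)

lemma line_edges_eq_if_open_segs_meet:
  assumes "inj_on fst P" "e \<in> line_edges P l" "e' \<in> line_edges P l"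
    and "z \<in> open_seg (fst e) (snd e)" "z \<in> open_seg (fst e') (snd e')"
  shows "e = e'"
proof -
  obtain p q p' q' where e: "e = (p, q)" "e' = (p', q')" by (cases e, cases e')
  have z: "fst p < fst z" "fst z < fst q" "fst p' < fst z" "fst z < fst q'"
    using assms(4,5) unfolding e open_seg_def by auto
  have P: "p \<in> P \<inter> l" "q \<in> P \<inter> l" "p' \<in> P \<inter> l" "q' \<in> P \<inter> l"
    and nb: "\<not> (\<exists>r\<in>P \<inter> l. fst p < fst r \<and> fst r < fst q)" "\<not> (\<exists>r\<in>P \<inter> l. fst p' < fst r \<and> fst r < fst q')"
    using assms(2,3) unfolding e line_edges_def by auto
  have "\<not> fst p < fst p'" "\<not> fst p' < fst p" "\<not> fst q < fst q'" "\<not> fst q' < fst q"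
    using nb P z by (meson less_trans)+
  then have "fst p = fst p'" "fst q = fst q'" by linarith+
  then show ?thesis using inj_onD[OF assms(1)] P unfolding e by blast
qed

lemma open_seg_subset_line_of_edge:
  "is_line l \<Longrightarrow> e \<in> line_edges P l \<Longrightarrow> open_seg (fst e) (snd e) \<subseteq> l"
  using open_seg_subset_line unfolding line_edges_def by (auto simp: case_prod_beta)

text \<open>
  Crossing edges lie on distinct lines, which meet only at the crossing point, and that point
  determines the edge on each line.
\<close>

lemma crossing_determined_by_lines:
  assumes "inj_on fst P" "is_line l" "is_line l'"
    and c: "(e1, e2) \<in> crossings (consecutive_edges P L)" "(e1', e2') \<in> crossings (consecutive_edges P L)"
    and "e1 \<in> line_edges P l" "e1' \<in> line_edges P l" "e2 \<in> line_edges P l'" "e2' \<in> line_edges P l'"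
  shows "(e1, e2) = (e1', e2')"
proof -
  obtain z where z: "z \<in> open_seg (fst e1) (snd e1)" "z \<in> open_seg (fst e2) (snd e2)"
    using c(1) unfolding crossings_def by auto
  obtain z' where z': "z' \<in> open_seg (fst e1') (snd e1')" "z' \<in> open_seg (fst e2') (snd e2')"
    using c(2) unfolding crossings_def by auto
  have "l \<noteq> l'"
  proof
    assume "l = l'"
    then have "e1 = e2" using line_edges_eq_if_open_segs_meet[OF assms(1)] assms(6,8) z by blast
    then show False using c(1) unfolding crossings_def by auto
  qed
  moreover have "z \<in> l" "z \<in> l'" "z' \<in> l" "z' \<in> l'"
    using open_seg_subset_line_of_edge assms(2,3,6-9) z z' by blast+
  ultimately have "z = z'" using line_eq_if_two_points[OF assms(2,3)] by blast
  then show ?thesis using line_edges_eq_if_open_segs_meet[OF assms(1)] assms(6-9) z z' by blast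
qed

lemma card_crossings_consecutive_edges:
  assumes "finite L" "inj_on fst P" "\<forall>l\<in>L. is_line l"
  shows "card (crossings (consecutive_edges P L)) \<le> card L ^ 2"
proof -
  define line_of where "line_of e = (SOME l. l \<in> L \<and> e \<in> line_edges P l)" for e
  have line_of: "line_of e \<in> L" "e \<in> line_edges P (line_of e)" if "e \<in> consecutive_edges P L" for e
    using someI_ex[of "\<lambda>l. l \<in> L \<and> e \<in> line_edges P l"] that
    unfolding line_of_def consecutive_edges_def by blast+
  have edges: "e \<in> consecutive_edges P L" "e' \<in> consecutive_edges P L"
    if "(e, e') \<in> crossings (consecutive_edges P L)" for e e'
    using that unfolding crossings_def by auto
  define f where "f = (\<lambda>(e, e'). (line_of e, line_of e'))"
  have "inj_on f (crossings (consecutive_edges P L))"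
  proof (rule inj_onI)
    fix c c' assume c: "c \<in> crossings (consecutive_edges P L)" "c' \<in> crossings (consecutive_edges P L)" "f c = f c'"
    obtain e1 e2 e1' e2' where cc: "c = (e1, e2)" "c' = (e1', e2')" by (cases c, cases c')
    have E: "e1 \<in> consecutive_edges P L" "e2 \<in> consecutive_edges P L"
      "e1' \<in> consecutive_edges P L" "e2' \<in> consecutive_edges P L"
      using edges c(1,2) unfolding cc by blast+
    have "line_of e1' = line_of e1" "line_of e2' = line_of e2" using c(3) unfolding cc f_def by auto
    then have "e1' \<in> line_edges P (line_of e1)" "e2' \<in> line_edges P (line_of e2)"
      using line_of(2)[OF E(3)] line_of(2)[OF E(4)] by simp_all
    moreover have "is_line (line_of e1)" "is_line (line_of e2)" using line_of(1) E(1,2) assms(3) by blast+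
    ultimately show "c = c'" unfolding cc
      using crossing_determined_by_lines[OF assms(2) _ _ c(1,2)[unfolded cc]] line_of(2)[OF E(1)] line_of(2)[OF E(2)]
      by blast
  qed
  moreover have "f ` crossings (consecutive_edges P L) \<subseteq> L \<times> L"
    using edges line_of(1) unfolding f_def by fastforce
  ultimately have "card (crossings (consecutive_edges P L)) \<le> card (L \<times> L)"
    using assms(1) by (intro card_inj_on_le) auto
  then show ?thesis by (simp add: card_cartesian_product power2_eq_square)
qed

theorem szemeredi_trotter_distinct_x:
  assumes "finite P" "inj_on fst P" "finite L" "\<forall>l\<in>L. is_line l"
  shows "card (incidences P L) \<le> 4 * card P + card L \<or>
         (card (incidences P L) - card L) ^ 3 \<le> 64 * card P ^ 2 * card L ^ 2"
proof -
  let ?E = "consecutive_edges P L"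
  interpret G: straight_graph P ?E by (rule straight_graph_consecutive_edges[OF assms(1,2,4)])
  have I: "card (incidences P L) - card L \<le> card ?E"
    using card_incidences_le_consecutive_edges[OF assms] by linarith
  show ?thesis
  proof (cases "4 * card P \<le> card ?E")
    case True
    have "(card (incidences P L) - card L) ^ 3 \<le> card ?E ^ 3" using I by (rule power_mono) simp
    also have "\<dots> \<le> 64 * card P ^ 2 * card (crossings ?E)" by (rule G.crossing_lemma[OF True])
    also have "\<dots> \<le> 64 * card P ^ 2 * card L ^ 2"
      using card_crossings_consecutive_edges[OF assms(3,2,4)] by simp
    finally show ?thesis ..
  next
    case False
    then show ?thesis using card_incidences_le_consecutive_edges[OF assms] by linarith
  qed
qed

definition shear :: "real \<Rightarrow> point \<Rightarrow> point" where
  "shear t z = (fst z + t * snd z, snd z)"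

lemma inj_shear: "inj (shear t)"
  by (rule injI) (auto simp: shear_def prod_eq_iff)

lemma is_line_shear_image:
  assumes "is_line l"
  shows "is_line (shear t ` l)"
proof -
  obtain a b c where ab: "a \<noteq> 0 \<or> b \<noteq> 0" and l: "l = {(x, y). a * x + b * y = c}"
    using assms unfolding is_line_def by blast
  have "shear t ` l = {(x, y). a * x + (b - a * t) * y = c}"
  proof (rule set_eqI)
    fix z :: point
    have "z = shear t (fst z - t * snd z, snd z)" by (simp add: shear_def)
    moreover have "(fst z - t * snd z, snd z) \<in> l \<longleftrightarrow> a * fst z + (b - a * t) * snd z = c"
      unfolding l by (simp add: algebra_simps)
    ultimately have "z \<in> shear t ` l" if "a * fst z + (b - a * t) * snd z = c" using that by blast
    moreover have "a * fst z + (b - a * t) * snd z = c" if "z \<in> shear t ` l"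
      using that unfolding l by (auto simp: shear_def algebra_simps)
    ultimately show "z \<in> shear t ` l \<longleftrightarrow> z \<in> {(x, y). a * x + (b - a * t) * y = c}"
      by (auto simp: case_prod_beta)
  qed
  moreover have "a \<noteq> 0 \<or> b - a * t \<noteq> 0" using ab by auto
  ultimately show ?thesis unfolding is_line_def by blast
qed

lemma ex_shear_inj_on_fst:
  assumes "finite P"
  obtains t where "inj_on (fst \<circ> shear t) P"
proof -
  define B where "B = (\<lambda>(p, q). (fst q - fst p) / (snd p - snd q)) ` (P \<times> P)"
  have "finite B" unfolding B_def using assms by simp
  then obtain t where t: "t \<notin> B" using ex_new_if_finite[OF infinite_UNIV_char_0] by blast
  have "p = q" if "p \<in> P" "q \<in> P" "fst p + t * snd p = fst q + t * snd q" for p q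
  proof (cases "snd p = snd q")
    case False
    then have "t = (fst q - fst p) / (snd p - snd q)" using that(3) by (simp add: field_simps)
    then have "t \<in> B" unfolding B_def using that(1,2) by (auto simp: image_iff)
    then show ?thesis using t by simp
  qed (use that(3) in \<open>simp add: prod_eq_iff\<close>)
  then show ?thesis using that[of t] by (auto simp: inj_on_def shear_def)
qed

lemma card_incidences_image:
  assumes "inj f"
  shows "card (incidences (f ` P) ((`) f ` L)) = card (incidences P L)"
proof -
  have "incidences (f ` P) ((`) f ` L) = map_prod f ((`) f) ` incidences P L"
  proof (rule set_eqI)
    fix x
    show "x \<in> incidences (f ` P) ((`) f ` L) \<longleftrightarrow> x \<in> map_prod f ((`) f) ` incidences P L"
    proof
      assume "x \<in> incidences (f ` P) ((`) f ` L)"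
      then have "fst x \<in> f ` P" "snd x \<in> (`) f ` L" "fst x \<in> snd x"
        unfolding incidences_def by (auto simp: case_prod_beta)
      then obtain p l where "p \<in> P" "l \<in> L" "f p \<in> f ` l" "x = (f p, f ` l)"
        by (auto simp: prod_eq_iff)
      moreover have "p \<in> l" using \<open>f p \<in> f ` l\<close> assms by (simp add: inj_image_mem_iff)
      ultimately show "x \<in> map_prod f ((`) f) ` incidences P L"
        unfolding incidences_def by (intro image_eqI[of _ _ "(p, l)"]) auto
    next
      assume "x \<in> map_prod f ((`) f) ` incidences P L"
      then obtain p l where "(p, l) \<in> incidences P L" "x = (f p, f ` l)" by auto
      then show "x \<in> incidences (f ` P) ((`) f ` L)" unfolding incidences_def by auto
    qed
  qed
  moreover have "inj_on (map_prod f ((`) f)) (incidences P L)"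
    using map_prod_inj_on[of f UNIV "(`) f" UNIV] assms inj_image_eq_iff
    by (metis inj_on_subset inj_onI subset_UNIV UNIV_Times_UNIV)
  ultimately show ?thesis by (simp add: card_image)
qed

theorem szemeredi_trotter:
  assumes "finite P" "finite L" "\<forall>l\<in>L. is_line l"
  shows "card (incidences P L) \<le> 4 * card P + card L \<or>
         (card (incidences P L) - card L) ^ 3 \<le> 64 * card P ^ 2 * card L ^ 2"
proof -
  obtain t where t: "inj_on (fst \<circ> shear t) P" using ex_shear_inj_on_fst[OF assms(1)] .
  have "card (shear t ` P) = card P" by (rule card_image[OF inj_on_subset[OF inj_shear subset_UNIV]])
  moreover have "card ((`) (shear t) ` L) = card L"
    using inj_shear[of t] by (simp add: card_image inj_on_def inj_image_eq_iff)
  moreover have "inj_on fst (shear t ` P)" using t by (auto simp: inj_on_def)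
  moreover have "\<forall>l\<in>(`) (shear t) ` L. is_line l" using assms(3) is_line_shear_image by blast
  ultimately show ?thesis
    using szemeredi_trotter_distinct_x[of "shear t ` P" "(`) (shear t) ` L"] assms(1,2)
    by (simp add: card_incidences_image[OF inj_shear])
qed

corollary szemeredi_trotter_rich:
  assumes "finite P" "finite L" "\<forall>l\<in>L. is_line l" "8 * card P \<le> card (incidences P L)"
  shows "card (incidences P L) \<le> 2 * card L \<or> card (incidences P L) ^ 3 \<le> 512 * card P ^ 2 * card L ^ 2"
proof -
  let ?I = "card (incidences P L)"
  have "?I ^ 3 \<le> 512 * card P ^ 2 * card L ^ 2" if "\<not> ?I \<le> 2 * card L"
  proof -
    have "(?I - card L) ^ 3 \<le> 64 * card P ^ 2 * card L ^ 2"
      using szemeredi_trotter[OF assms(1-3)] assms(4) that by linarith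
    moreover have "?I ^ 3 \<le> (2 * (?I - card L)) ^ 3" using that by (intro power_mono) auto
    ultimately show ?thesis by (simp add: power_mult_distrib)
  qed
  then show ?thesis by blast
qed

section \<open>The lower bound for the number of lines\<close>

lemma powr_cube_root_ge:
  fixes x y :: real
  assumes "0 \<le> y" "y ^ 3 \<le> x"
  shows "y \<le> x powr (1/3)"
proof -
  have "y = (y powr 3) powr (1/3)" using assms(1) by (simp add: powr_powr del: powr_numeral)
  also have "\<dots> = (y ^ 3) powr (1/3)" using assms(1) by simp
  also have "\<dots> \<le> x powr (1/3)" using assms by (intro powr_mono2) auto
  finally show ?thesis .
qed

lemma power_powr: "0 < x \<Longrightarrow> (x ^ n) powr a = x powr (real n * a)"
  for x :: real
  by (simp add: powr_powr flip: powr_realpow)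

lemma eight_points_le_incidences:
  fixes \<alpha> \<beta> A B C M N :: real
  assumes "A > 0" "B > 0" "M > 0" "N > 0" "(8 * A / B) ^ 3 \<le> C" "N \<le> M ^ 2 / C"
  shows "8 * (A * M powr \<alpha> * N powr \<beta>) \<le> B * M powr (\<alpha> + 2/3) * N powr (\<beta> - 1/3)"
proof -
  have "(8 * A / B) ^ 3 > 0" using assms(1,2) by simp
  then have "C > 0" using assms(5) by linarith
  then have "C \<le> M ^ 2 / N" using assms(4,6) by (simp add: field_simps)
  then have "8 * A / B \<le> (M ^ 2 / N) powr (1/3)"
    using assms by (intro powr_cube_root_ge) auto
  also have "(M ^ 2 / N) powr (1/3) = M powr (2/3) * N powr (-1/3)"
    using assms(3,4) by (simp add: powr_divide power_powr powr_minus_divide)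
  finally have "8 * A \<le> B * (M powr (2/3) * N powr (-1/3))" using assms(2) by (simp add: field_simps)
  then have "8 * A * (M powr \<alpha> * N powr \<beta>) \<le> B * (M powr (2/3) * N powr (-1/3)) * (M powr \<alpha> * N powr \<beta>)"
    using assms(3,4) by (intro mult_right_mono) auto
  then show ?thesis by (simp add: powr_add powr_diff powr_minus_divide algebra_simps)
qed

lemma lines_bound_le_incidences_bound:
  fixes \<alpha> \<beta> B M N :: real
  assumes "2 * \<alpha> + \<beta> = 1" "\<alpha> \<le> 2/3" "B > 0" "M > 0" "N > 0" "M \<le> N ^ 2"
  shows "B * (M powr (\<alpha>/2 + 1) * N powr (\<beta>/2 - 1/2)) \<le> B * M powr (\<alpha> + 2/3) * N powr (\<beta> - 1/3)"
proof -
  have "1 \<le> (N ^ 2 / M) powr (1/3 - \<alpha>/2)" using assms by (intro ge_one_powr_ge_zero) auto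
  also have "\<dots> = M powr (\<alpha>/2 - 1/3) * N powr (2/3 - \<alpha>)"
    using assms(4,5) by (simp add: powr_divide power_powr powr_minus_divide powr_diff algebra_simps)
  finally have "B * (M powr (\<alpha>/2 + 1) * N powr (\<beta>/2 - 1/2))
      \<le> B * (M powr (\<alpha>/2 + 1) * N powr (\<beta>/2 - 1/2)) * (M powr (\<alpha>/2 - 1/3) * N powr (2/3 - \<alpha>))"
    using assms(3-5) by simp
  also have "\<dots> = B * (M powr (\<alpha>/2 + 1) * M powr (\<alpha>/2 - 1/3)) * (N powr (\<beta>/2 - 1/2) * N powr (2/3 - \<alpha>))"
    by (simp add: algebra_simps)
  also have "\<dots> = B * M powr ((\<alpha>/2 + 1) + (\<alpha>/2 - 1/3)) * N powr ((\<beta>/2 - 1/2) + (2/3 - \<alpha>))"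
    by (simp only: powr_add[of M "\<alpha>/2 + 1"] powr_add[of N "\<beta>/2 - 1/2"] mult.assoc)
  also have "(\<alpha>/2 + 1) + (\<alpha>/2 - 1/3) = \<alpha> + 2/3" using assms(1) by linarith
  also have "(\<beta>/2 - 1/2) + (2/3 - \<alpha>) = \<beta> - 1/3" using assms(1) by linarith
  finally show ?thesis .
qed

lemma incidences_bound_cube:
  fixes \<alpha> \<beta> A B M N :: real
  assumes "2 * \<alpha> + \<beta> = 1" "A > 0" "M > 0" "N > 0"
  shows "(B * M powr (\<alpha> + 2/3) * N powr (\<beta> - 1/3)) ^ 3
    = B ^ 3 / A ^ 2 * (M powr (\<alpha>/2 + 1) * N powr (\<beta>/2 - 1/2)) ^ 2 * (A * M powr \<alpha> * N powr \<beta>) ^ 2"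
proof -
  have "(B * M powr (\<alpha> + 2/3) * N powr (\<beta> - 1/3)) ^ 3 = B ^ 3 * M powr (3 * \<alpha> + 2) * N powr (3 * \<beta> - 1)"
    using assms(3,4) by (simp add: power_mult_distrib powr_power algebra_simps)
  also have "\<dots> = B ^ 3 * (M powr (\<alpha> + 2) * M powr (2 * \<alpha>)) * (N powr (\<beta> - 1) * N powr (2 * \<beta>))"
    by (simp flip: powr_add)
  also have "\<dots> = B ^ 3 / A ^ 2 * (M powr (\<alpha>/2 + 1) * N powr (\<beta>/2 - 1/2)) ^ 2 * (A * M powr \<alpha> * N powr \<beta>) ^ 2"
    using assms(2-4) by (simp add: power_mult_distrib powr_power algebra_simps)
  finally show ?thesis .
qed

lemma lines_lower_bound:
  fixes I p l I0 P0 T B K :: real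
  assumes "I0 \<le> I" "0 \<le> p" "p \<le> P0" "0 \<le> l" "0 < T" "0 < I0"
    and "I \<le> 2 * l \<or> I ^ 3 \<le> 512 * p ^ 2 * l ^ 2"
    and "B * T \<le> I0" "I0 ^ 3 = K * T ^ 2 * P0 ^ 2"
  shows "min (B / 2) (sqrt (K / 512)) * T \<le> l"
  using assms(7)
proof
  assume "I \<le> 2 * l"
  have "min (B / 2) (sqrt (K / 512)) * T \<le> B / 2 * T" using assms(5) by (intro mult_right_mono) auto
  then show ?thesis using assms(1,8) \<open>I \<le> 2 * l\<close> by linarith
next
  assume "I ^ 3 \<le> 512 * p ^ 2 * l ^ 2"
  have "P0 > 0" using assms(2,3,6,9) by (cases "P0 = 0") auto
  have "K * T ^ 2 * P0 ^ 2 \<le> I ^ 3" using assms(1,6,9) by (metis power_mono less_imp_le)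
  also have "\<dots> \<le> 512 * p ^ 2 * l ^ 2" by fact
  also have "\<dots> \<le> 512 * P0 ^ 2 * l ^ 2" using assms(2,3) by (simp add: power_mono mult_right_mono)
  finally have "(K / 512) * T ^ 2 \<le> l ^ 2" using \<open>P0 > 0\<close> by (simp add: field_simps)
  then have "sqrt (K / 512 * T ^ 2) \<le> sqrt (l ^ 2)" by (rule real_sqrt_le_mono)
  moreover have "sqrt (K / 512 * T ^ 2) = sqrt (K / 512) * T" using assms(5) by (subst real_sqrt_mult) simp
  ultimately have "sqrt (K / 512) * T \<le> l" using assms(4) by simp
  moreover have "min (B / 2) (sqrt (K / 512)) * T \<le> sqrt (K / 512) * T" using assms(5) by (intro mult_right_mono) auto
  ultimately show ?thesis by linarith
qed

lemma card_lines_lower_bound: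
  fixes \<alpha> \<beta> A B C :: real and m n :: nat
  assumes "2 * \<alpha> + \<beta> = 1" "\<alpha> \<le> 2/3" "A > 0" "B > 0" "1 \<le> C" "(8 * A / B) ^ 3 \<le> C"
    and mn: "m > 0" "n > 0" "real m \<le> (real n)^2 / C" "real n \<le> (real m)^2 / C"
    and PL: "finite P" "finite L" "\<forall>l\<in>L. is_line l"
    and P: "real (card P) \<le> A * real m powr \<alpha> * real n powr \<beta>"
    and I: "B * real m powr (\<alpha> + 2/3) * real n powr (\<beta> - 1/3) \<le> real (card (incidences P L))"
  shows "min (B / 2) (sqrt (B ^ 3 / A ^ 2 / 512)) * (real m powr (\<alpha>/2 + 1) * real n powr (\<beta>/2 - 1/2))
    \<le> real (card L)"
proof -
  define T where "T = real m powr (\<alpha>/2 + 1) * real n powr (\<beta>/2 - 1/2)"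
  have "(real n)^2 / C \<le> (real n)^2 / 1" using assms(5) by (intro divide_left_mono) auto
  then have "real m \<le> (real n)^2" using mn(3) by linarith
  have "8 * (A * real m powr \<alpha> * real n powr \<beta>) \<le> B * real m powr (\<alpha> + 2/3) * real n powr (\<beta> - 1/3)"
    using mn(1,2,4) assms(3,4,6) by (intro eight_points_le_incidences) auto
  then have "8 * card P \<le> card (incidences P L)" using P I by linarith
  then have "card (incidences P L) \<le> 2 * card L \<or> card (incidences P L) ^ 3 \<le> 512 * card P ^ 2 * card L ^ 2"
    by (rule szemeredi_trotter_rich[OF PL])
  then have "real (card (incidences P L)) \<le> 2 * real (card L) \<or>
      real (card (incidences P L)) ^ 3 \<le> 512 * real (card P) ^ 2 * real (card L) ^ 2"
    by (metis (mono_tags) of_nat_le_iff of_nat_mult of_nat_power of_nat_numeral)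
  then show ?thesis unfolding T_def[symmetric]
  proof (intro lines_lower_bound[OF I _ P])
    show "0 < T" using mn(1,2) unfolding T_def by simp
    show "0 < B * real m powr (\<alpha> + 2/3) * real n powr (\<beta> - 1/3)" using mn(1,2) assms(4) by simp
    show "B * T \<le> B * real m powr (\<alpha> + 2/3) * real n powr (\<beta> - 1/3)"
      unfolding T_def using mn(1,2) \<open>real m \<le> (real n)^2\<close>
      by (intro lines_bound_le_incidences_bound[OF assms(1,2,4)]) auto
    show "(B * real m powr (\<alpha> + 2/3) * real n powr (\<beta> - 1/3)) ^ 3
        = B ^ 3 / A ^ 2 * T ^ 2 * (A * real m powr \<alpha> * real n powr \<beta>) ^ 2"
      unfolding T_def using mn(1,2) by (intro incidences_bound_cube[OF assms(1,3)]) auto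
  qed auto
qed

theorem proposition2p8:
  fixes \<alpha> \<beta> A B :: real
  assumes "2 * \<alpha> + \<beta> = 1" and "\<alpha> \<le> 2/3" and "A > 0" and "B > 0"
  shows "\<exists>C1 > 0. \<exists>c > 0. \<forall>(m::nat) (n::nat) P L.
           m > 0 \<longrightarrow> n > 0 \<longrightarrow>
           real m \<le> (real n)^2 / C1 \<longrightarrow> real n \<le> (real m)^2 / C1 \<longrightarrow>
           finite P \<longrightarrow> finite L \<longrightarrow> (\<forall>l\<in>L. is_line l) \<longrightarrow>
           real (card P) \<le> A * real m powr \<alpha> * real n powr \<beta> \<longrightarrow>
           real (card (incidences P L)) \<ge> B * real m powr (\<alpha> + 2/3) * real n powr (\<beta> - 1/3) \<longrightarrow>
           real (card L) \<ge> c * real m powr (\<alpha>/2 + 1) * real n powr (\<beta>/2 - 1/2)"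
proof (intro exI conjI allI impI)
  define C1 where "C1 = max 1 ((8 * A / B) ^ 3)"
  define c where "c = min (B / 2) (sqrt (B ^ 3 / A ^ 2 / 512))"
  show "C1 > 0" "c > 0" using assms(3,4) unfolding C1_def c_def by auto
  fix m n :: nat and P L
  assume "m > 0" "n > 0" "real m \<le> (real n)^2 / C1" "real n \<le> (real m)^2 / C1"
    and "finite P" "finite L" "\<forall>l\<in>L. is_line l"
    and "real (card P) \<le> A * real m powr \<alpha> * real n powr \<beta>"
    and "real (card (incidences P L)) \<ge> B * real m powr (\<alpha> + 2/3) * real n powr (\<beta> - 1/3)"
  then have "c * (real m powr (\<alpha>/2 + 1) * real n powr (\<beta>/2 - 1/2)) \<le> real (card L)"
    unfolding c_def by (intro card_lines_lower_bound[OF assms, of C1]) (auto simp: C1_def)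
  then show "c * real m powr (\<alpha>/2 + 1) * real n powr (\<beta>/2 - 1/2) \<le> real (card L)"
    by (simp add: mult.assoc)
qed

end
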